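(* Let $G$ be a Garside group, $a\in G$, $a'\in C^{sum}(a)$, and let $\Gamma$ be the minimal summit graph of $a$. Let $p:\pi_1(\Gamma,a')\to G$ be the group homomorphism sending a loop based at $a'$, given as a sequence of arrows $\alpha_1^{\epsilon_1}\cdots\alpha_r^{\epsilon_r}$ ($\epsilon_j=\pm1$, an arrow traversed against its direction having exponent $-1$), to the element $s(\alpha_1)^{\epsilon_1}\cdots s(\alpha_r)^{\epsilon_r}\in G$, where $s(\alpha)$ is the label of $\alpha$. Then the image of $p$ is exactly the centralizer $Z(a')=\{c\in G: ca'=a'c\}$.
   Context: A Garside monoid $M$ is an atomic, left and right cancellative monoid with left and right lcm's and gcd's for all pairs, having a Garside element $\Delta$ whose left divisors coincide with its right divisors, form a finite set and generate $M$; $G$ is its group of fractions, containing $M$. Prefix order on $G$: $a\preceq b$ iff $a^{-1}b\in M$. Simple elements are the divisors of $\Delta$ in $M$; $S$ is the set of simple elements. For $x\in G$, $\inf(x)=\max\{r:\Delta^r\preceq x\}$, $\sup(x)=\min\{r: x\preceq\Delta^r\}$. The summit class $C^{sum}(a)$ is the (finite, nonempty) set of conjugates of $a$ with maximal $\inf$ and minimal $\sup$ among all conjugates of $a$. For $v\in C^{sum}(a)$, $S^{sum}_v$ is the set of $\preceq$-minimal elements of $\{s\in S\setminus\{1\}: s^{-1}vs\in C^{sum}(a)\}$. The minimal summit graph $\Gamma$ of $a$ is the finite directed graph whose vertices are the elements of $C^{sum}(a)$, with an arrow from $v$ to $w$ labelled $s$ for each $s\in S^{sum}_v$ such that $s^{-1}vs=w$.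 The fundamental group $\pi_1(\Gamma,a')$ is that of the underlying (undirected) graph. *)

theory Defs
  imports "HOL-Algebra.Algebra"
begin

text \<open>A Garside group is presented as an ambient group G (HOL-Algebra structure)
together with a submonoid M of G that generates G as a group (so G is the group
of fractions of M) and a Garside element Delta of M.\<close>

definition prefix_le :: "('g, 'b) monoid_scheme \<Rightarrow> 'g set \<Rightarrow> 'g \<Rightarrow> 'g \<Rightarrow> bool" where
  "prefix_le G M a b \<longleftrightarrow> inv\<^bsub>G\<^esub> a \<otimes>\<^bsub>G\<^esub> b \<in> M"

definition suffix_le :: "('g, 'b) monoid_scheme \<Rightarrow> 'g set \<Rightarrow> 'g \<Rightarrow> 'g \<Rightarrow> bool" where
  "suffix_le G M a b \<longleftrightarrow> b \<otimes>\<^bsub>G\<^esub> inv\<^bsub>G\<^esub> a \<in> M"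

definition mprod :: "('g, 'b) monoid_scheme \<Rightarrow> 'g list \<Rightarrow> 'g" where
  "mprod G xs = foldr (\<lambda>x y. x \<otimes>\<^bsub>G\<^esub> y) xs \<one>\<^bsub>G\<^esub>"

definition atomic_monoid :: "('g, 'b) monoid_scheme \<Rightarrow> 'g set \<Rightarrow> bool" where
  "atomic_monoid G M \<longleftrightarrow>
     (\<forall>x\<in>M. \<exists>N::nat. \<forall>as. set as \<subseteq> M - {\<one>\<^bsub>G\<^esub>} \<and> mprod G as = x \<longrightarrow> length as \<le> N)"

definition has_lcms_gcds :: "('g \<Rightarrow> 'g \<Rightarrow> bool) \<Rightarrow> 'g set \<Rightarrow> bool" where
  "has_lcms_gcds R M \<longleftrightarrow>
     (\<forall>a\<in>M. \<forall>b\<in>M.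
        (\<exists>c\<in>M. R a c \<and> R b c \<and> (\<forall>d\<in>M. R a d \<and> R b d \<longrightarrow> R c d)) \<and>
        (\<exists>c\<in>M. R c a \<and> R c b \<and> (\<forall>d\<in>M. R d a \<and> R d b \<longrightarrow> R d c)))"

definition simples :: "('g, 'b) monoid_scheme \<Rightarrow> 'g set \<Rightarrow> 'g \<Rightarrow> 'g set" where
  "simples G M \<Delta> = {s\<in>M. prefix_le G M s \<Delta>}"

definition garside_group :: "('g, 'b) monoid_scheme \<Rightarrow> 'g set \<Rightarrow> 'g \<Rightarrow> bool" where
  "garside_group G M \<Delta> \<longleftrightarrow>
     group G \<and> submonoid M G \<and> generate G M = carrier G \<and>
     atomic_monoid G M \<and>
     has_lcms_gcds (prefix_le G M) M \<and> has_lcms_gcds (suffix_le G M) M \<and>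
     \<Delta> \<in> M \<and>
     {s\<in>M. prefix_le G M s \<Delta>} = {s\<in>M. suffix_le G M s \<Delta>} \<and>
     finite {s\<in>M. prefix_le G M s \<Delta>} \<and>
     (\<forall>x\<in>M. \<exists>xs. set xs \<subseteq> simples G M \<Delta> \<and> mprod G xs = x)"

definition ginf :: "('g, 'b) monoid_scheme \<Rightarrow> 'g set \<Rightarrow> 'g \<Rightarrow> 'g \<Rightarrow> int" where
  "ginf G M \<Delta> x = (GREATEST r::int. prefix_le G M (\<Delta> [^]\<^bsub>G\<^esub> r) x)"

definition gsup :: "('g, 'b) monoid_scheme \<Rightarrow> 'g set \<Rightarrow> 'g \<Rightarrow> 'g \<Rightarrow> int" where
  "gsup G M \<Delta> x = (LEAST r::int. prefix_le G M x (\<Delta> [^]\<^bsub>G\<^esub> r))"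

definition conjugates :: "('g, 'b) monoid_scheme \<Rightarrow> 'g \<Rightarrow> 'g set" where
  "conjugates G a = {inv\<^bsub>G\<^esub> c \<otimes>\<^bsub>G\<^esub> a \<otimes>\<^bsub>G\<^esub> c | c. c \<in> carrier G}"

definition summit_class :: "('g, 'b) monoid_scheme \<Rightarrow> 'g set \<Rightarrow> 'g \<Rightarrow> 'g \<Rightarrow> 'g set" where
  "summit_class G M \<Delta> a =
     {v \<in> conjugates G a.
        (\<forall>w\<in>conjugates G a. ginf G M \<Delta> w \<le> ginf G M \<Delta> v) \<and>
        (\<forall>w\<in>conjugates G a. gsup G M \<Delta> v \<le> gsup G M \<Delta> w)}"

definition summit_min_simples :: "('g, 'b) monoid_scheme \<Rightarrow> 'g set \<Rightarrow> 'g \<Rightarrow> 'g \<Rightarrow> 'g \<Rightarrow> 'g set" where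
  "summit_min_simples G M \<Delta> a v =
     (let T = {s \<in> simples G M \<Delta> - {\<one>\<^bsub>G\<^esub>}.
                 inv\<^bsub>G\<^esub> s \<otimes>\<^bsub>G\<^esub> v \<otimes>\<^bsub>G\<^esub> s \<in> summit_class G M \<Delta> a}
      in {s \<in> T. \<forall>t\<in>T. prefix_le G M t s \<longrightarrow> t = s})"

text \<open>The arrows of Gamma are the pairs (v, s) with v in C^sum(a), s in S^sum_v, going
from v to s^-1 v s with label s.
msg_walk G M Delta a x z g: there is a walk from x to z in the underlying
undirected graph whose image under p (product of labels, inverted for arrows
traversed backwards, in the order of traversal) is g.\<close>
inductive msg_walk :: "('g, 'b) monoid_scheme \<Rightarrow> 'g set \<Rightarrow> 'g \<Rightarrow> 'g \<Rightarrow> 'g \<Rightarrow> 'g \<Rightarrow> 'g \<Rightarrow> bool"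
  for G M \<Delta> a where
  nil: "x \<in> summit_class G M \<Delta> a \<Longrightarrow> msg_walk G M \<Delta> a x x \<one>\<^bsub>G\<^esub>"
| fwd: "\<lbrakk> x \<in> summit_class G M \<Delta> a; s \<in> summit_min_simples G M \<Delta> a x;
          msg_walk G M \<Delta> a (inv\<^bsub>G\<^esub> s \<otimes>\<^bsub>G\<^esub> x \<otimes>\<^bsub>G\<^esub> s) z g \<rbrakk>
        \<Longrightarrow> msg_walk G M \<Delta> a x z (s \<otimes>\<^bsub>G\<^esub> g)"
| bwd: "\<lbrakk> y \<in> summit_class G M \<Delta> a; s \<in> summit_min_simples G M \<Delta> a y;
          inv\<^bsub>G\<^esub> s \<otimes>\<^bsub>G\<^esub> y \<otimes>\<^bsub>G\<^esub> s = x; msg_walk G M \<Delta> a y z g \<rbrakk>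
        \<Longrightarrow> msg_walk G M \<Delta> a x z (inv\<^bsub>G\<^esub> s \<otimes>\<^bsub>G\<^esub> g)"

definition msg_loop_image :: "('g, 'b) monoid_scheme \<Rightarrow> 'g set \<Rightarrow> 'g \<Rightarrow> 'g \<Rightarrow> 'g \<Rightarrow> 'g set" where
  "msg_loop_image G M \<Delta> a a' = {g. msg_walk G M \<Delta> a a' a' g}"

end

theory Submission
  imports Defs
begin

text \<open>
  The product along a walk conjugates its start vertex into its end vertex, so the image of a
  loop at a' centralizes a'. Conversely, write a centralizing c as \<Delta>^-n m with m \<in> M; both m
  and \<Delta>^n conjugate y = \<Delta>^n a' \<Delta>^-n, which lies in the summit class, into a'. The key fact
  is that whenever u \<in> M conjugates a summit element x into the summit class, the graph contains a
  directed path from x to u^-1 x u whose labels multiply to u: the summit class is closed under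
  prefix gcds of such conjugators, so gcd(u, \<Delta>) conjugates x into it, some arrow label t of x is a
  prefix of it, and one recurses on t^-1 u, whose atomic length is smaller. The path for m
  followed by the reverse of the path for \<Delta>^n is a loop at a' with image c.
\<close>

section \<open>Conjugation and powers in groups\<close>

context monoid
begin

lemma mprod_Nil [simp]: "mprod G [] = \<one>"
  by (simp add: mprod_def)

lemma mprod_Cons [simp]: "mprod G (x # xs) = x \<otimes> mprod G xs"
  by (simp add: mprod_def)

lemma mprod_closed: "set xs \<subseteq> carrier G \<Longrightarrow> mprod G xs \<in> carrier G"
  by (induction xs) auto

lemma mprod_append:
  "set xs \<subseteq> carrier G \<Longrightarrow> set ys \<subseteq> carrier G \<Longrightarrow> mprod G (xs @ ys) = mprod G xs \<otimes> mprod G ys"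
  by (induction xs) (auto simp: m_assoc mprod_closed)

end

context group
begin

lemma mult_inv_cancel_left [simp]: "x \<in> carrier G \<Longrightarrow> y \<in> carrier G \<Longrightarrow> x \<otimes> (inv x \<otimes> y) = y"
  by (simp flip: m_assoc)

lemma inv_mult_cancel_left [simp]: "x \<in> carrier G \<Longrightarrow> y \<in> carrier G \<Longrightarrow> inv x \<otimes> (x \<otimes> y) = y"
  by (simp flip: m_assoc)

lemma conj_mprod:
  assumes "x \<in> carrier G" "set xs \<subseteq> carrier G"
  shows "inv x \<otimes> mprod G xs \<otimes> x = mprod G (map (\<lambda>s. inv x \<otimes> s \<otimes> x) xs)"
  using assms(2)
proof (induction xs)
  case Nil
  from assms(1) show ?case
    by simp
next
  case (Cons s xs)
  then have "s \<in> carrier G" "set xs \<subseteq> carrier G"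
    by auto
  then have "inv x \<otimes> mprod G (s # xs) \<otimes> x = (inv x \<otimes> s \<otimes> x) \<otimes> (inv x \<otimes> mprod G xs \<otimes> x)"
    using assms(1) by (simp add: m_assoc mprod_closed)
  with Cons.IH \<open>set xs \<subseteq> carrier G\<close> show ?case
    by simp
qed

lemma int_pow_commute: "x \<in> carrier G \<Longrightarrow> x [^] (i::int) \<otimes> x [^] (j::int) = x [^] j \<otimes> x [^] i"
  by (simp flip: int_pow_mult add: add.commute)

lemma conj_nat_pow_closed:
  assumes "A \<subseteq> carrier G" "x \<in> carrier G" "\<And>m. m \<in> A \<Longrightarrow> inv x \<otimes> m \<otimes> x \<in> A" "m \<in> A"
  shows "inv (x [^] (n::nat)) \<otimes> m \<otimes> x [^] n \<in> A"
proof -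
  have m: "m \<in> carrier G"
    using assms(1,4) by blast
  show ?thesis
  proof (induction n)
    case 0
    from m assms(4) show ?case
      by simp
  next
    case (Suc n)
    have "inv (x [^] Suc n) \<otimes> m \<otimes> x [^] Suc n = inv x \<otimes> (inv (x [^] n) \<otimes> m \<otimes> x [^] n) \<otimes> x"
      using m assms(2) by (simp add: m_assoc inv_mult_group)
    then show ?case
      using assms(3)[OF Suc.IH] by (simp only:)
  qed
qed

lemma conj_int_pow_closed:
  assumes "A \<subseteq> carrier G" "x \<in> carrier G"
    and "\<And>m. m \<in> A \<Longrightarrow> inv x \<otimes> m \<otimes> x \<in> A" "\<And>m. m \<in> A \<Longrightarrow> x \<otimes> m \<otimes> inv x \<in> A"
    and "m \<in> A"
  shows "inv (x [^] (p::int)) \<otimes> m \<otimes> x [^] p \<in> A"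
proof (cases "p < 0")
  case True
  have "inv (inv x [^] nat (- p)) \<otimes> m \<otimes> inv x [^] nat (- p) \<in> A"
    by (rule conj_nat_pow_closed[OF assms(1) inv_closed[OF assms(2)] _ assms(5)])
      (simp add: assms(2,4))
  moreover have "x [^] p = inv x [^] nat (- p)"
  proof -
    have "p = - int (nat (- p))"
      using True by simp
    then have "x [^] p = inv (x [^] nat (- p))"
      using assms(2) int_pow_neg_int by metis
    with assms(2) show ?thesis
      by (simp add: nat_pow_inv)
  qed
  ultimately show ?thesis
    by (simp only:)
next
  case False
  have "inv (x [^] nat p) \<otimes> m \<otimes> x [^] nat p \<in> A"
    using assms(1,2,3,5) by (rule conj_nat_pow_closed)
  moreover have "x [^] p = x [^] nat p"
    using False by (simp add: pow_nat)
  ultimately show ?thesis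
    by (simp only:)
qed

end

section \<open>The prefix order of an atomic submonoid\<close>

locale group_submonoid = group G for G :: "('g, 'b) monoid_scheme" (structure) +
  fixes M :: "'g set"
  assumes submonoid: "submonoid M G"
begin

abbreviation prefix_le_M :: "'g \<Rightarrow> 'g \<Rightarrow> bool" (infix \<open>\<preceq>\<close> 50)
  where "x \<preceq> y \<equiv> prefix_le G M x y"

lemma M_carrier [simp]: "x \<in> M \<Longrightarrow> x \<in> carrier G"
  using submonoid by (rule submonoid.mem_carrier)

lemma one_M [simp]: "\<one> \<in> M"
  using submonoid by (rule submonoid.one_closed)

lemma mult_M [intro, simp]: "x \<in> M \<Longrightarrow> y \<in> M \<Longrightarrow> x \<otimes> y \<in> M"
  using submonoid by (rule submonoid.m_closed)

lemma mprod_M: "set xs \<subseteq> M \<Longrightarrow> mprod G xs \<in> M"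
  by (induction xs) auto

lemma simple_M: "s \<in> simples G M \<Delta> \<Longrightarrow> s \<in> M"
  by (simp add: simples_def)

lemma prefix_le_refl: "x \<in> carrier G \<Longrightarrow> x \<preceq> x"
  by (simp add: prefix_le_def)

lemma prefix_le_trans:
  assumes "x \<in> carrier G" "y \<in> carrier G" "z \<in> carrier G" "x \<preceq> y" "y \<preceq> z"
  shows "x \<preceq> z"
proof -
  have "inv x \<otimes> z = (inv x \<otimes> y) \<otimes> (inv y \<otimes> z)"
    using assms by (simp add: m_assoc)
  with assms show ?thesis
    by (simp add: prefix_le_def)
qed

lemma prefix_le_mult_left_iff:
  "x \<in> carrier G \<Longrightarrow> y \<in> carrier G \<Longrightarrow> z \<in> carrier G \<Longrightarrow> z \<otimes> x \<preceq> z \<otimes> y \<longleftrightarrow> x \<preceq> y"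
  by (simp add: prefix_le_def inv_mult_group m_assoc)

lemma prefix_le_mult_M: "x \<in> carrier G \<Longrightarrow> m \<in> M \<Longrightarrow> x \<preceq> x \<otimes> m"
  by (simp add: prefix_le_def flip: m_assoc)

end

locale atomic_submonoid = group_submonoid G M for G :: "('g, 'b) monoid_scheme" (structure) and M +
  assumes atomic: "atomic_monoid G M"
begin

definition factor_length :: "'g \<Rightarrow> nat" where
  "factor_length u = Max {length as | as. set as \<subseteq> M - {\<one>} \<and> mprod G as = u}"

lemma finite_factorization_lengths:
  assumes "u \<in> M"
  shows "finite {length as | as. set as \<subseteq> M - {\<one>} \<and> mprod G as = u}"
proof -
  from atomic assms obtain N where "\<forall>as. set as \<subseteq> M - {\<one>} \<and> mprod G as = u \<longrightarrow> length as \<le> N"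
    unfolding atomic_monoid_def by blast
  then show ?thesis
    by (auto simp: finite_nat_set_iff_bounded_le)
qed

lemma factor_length_ge:
  assumes "set as \<subseteq> M - {\<one>}" "mprod G as = u"
  shows "length as \<le> factor_length u"
proof -
  have "u \<in> M"
    using assms mprod_M by blast
  with assms show ?thesis
    unfolding factor_length_def by (blast intro: Max_ge finite_factorization_lengths)
qed

lemma factor_length_attained:
  assumes "u \<in> M"
  obtains as where "set as \<subseteq> M - {\<one>}" "mprod G as = u" "length as = factor_length u"
proof -
  have "set (if u = \<one> then [] else [u]) \<subseteq> M - {\<one>} \<and> mprod G (if u = \<one> then [] else [u]) = u"
    using assms by simp
  then have "{length as | as. set as \<subseteq> M - {\<one>} \<and> mprod G as = u} \<noteq> {}"
    by blast
  with finite_factorization_lengths[OF assms]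
  have "factor_length u \<in> {length as | as. set as \<subseteq> M - {\<one>} \<and> mprod G as = u}"
    unfolding factor_length_def by (rule Max_in)
  then obtain as where "set as \<subseteq> M - {\<one>}" "mprod G as = u" "length as = factor_length u"
    by auto
  then show ?thesis
    by (rule that)
qed

lemma factor_length_mult:
  assumes "t \<in> M" "u \<in> M"
  shows "factor_length t + factor_length u \<le> factor_length (t \<otimes> u)"
proof -
  obtain as bs where "set as \<subseteq> M - {\<one>}" "mprod G as = t" "length as = factor_length t"
    and "set bs \<subseteq> M - {\<one>}" "mprod G bs = u" "length bs = factor_length u"
    using factor_length_attained assms by metis
  moreover from this have "mprod G (as @ bs) = t \<otimes> u"
    using mprod_append[of as bs] M_carrier by blast
  ultimately show ?thesis
    using factor_length_ge[of "as @ bs"] by auto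
qed

lemma factor_length_pos: "u \<in> M \<Longrightarrow> u \<noteq> \<one> \<Longrightarrow> 0 < factor_length u"
  using factor_length_ge[of "[u]" u] by simp

lemma M_units_trivial:
  assumes "m \<in> M" "inv m \<in> M"
  shows "m = \<one>"
proof (rule ccontr)
  assume "m \<noteq> \<one>"
  have "factor_length \<one> + factor_length \<one> \<le> factor_length \<one>"
    using factor_length_mult[of \<one> \<one>] by simp
  moreover have "factor_length m + factor_length (inv m) \<le> factor_length \<one>"
    using factor_length_mult[OF assms] assms by simp
  ultimately show False
    using factor_length_pos[OF assms(1) \<open>m \<noteq> \<one>\<close>] by simp
qed

lemma M_prefix_le_one: "m \<in> M \<Longrightarrow> m \<preceq> \<one> \<Longrightarrow> m = \<one>"
  using M_units_trivial by (simp add: prefix_le_def)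

lemma prefix_le_antisym:
  assumes "x \<in> carrier G" "y \<in> carrier G" "x \<preceq> y" "y \<preceq> x"
  shows "x = y"
proof -
  have "inv (inv x \<otimes> y) = inv y \<otimes> x"
    using assms by (simp add: inv_mult_group)
  then have "inv x \<otimes> y = \<one>"
    using assms M_units_trivial[of "inv x \<otimes> y"] by (simp add: prefix_le_def)
  then have "x \<otimes> (inv x \<otimes> y) = x"
    using assms by simp
  with assms show ?thesis
    by simp
qed

end

section \<open>Garside groups\<close>

locale garside =
  fixes G :: "('g, 'b) monoid_scheme" (structure) and M :: "'g set" and \<Delta> :: 'g
  assumes garside_group: "garside_group G M \<Delta>"

sublocale garside \<subseteq> atomic_submonoid G M
  using garside_group
  by (simp add: garside_group_def atomic_submonoid_def atomic_submonoid_axioms_def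
      group_submonoid_def group_submonoid_axioms_def)

context garside
begin

lemma
  shows Delta_M [simp]: "\<Delta> \<in> M"
    and generate_M: "generate G M = carrier G"
    and prefix_gcds: "has_lcms_gcds (prefix_le G M) M"
    and simples_eq_right_divisors: "simples G M \<Delta> = {s \<in> M. suffix_le G M s \<Delta>}"
    and finite_simples: "finite (simples G M \<Delta>)"
    and simples_generate: "x \<in> M \<Longrightarrow> \<exists>xs. set xs \<subseteq> simples G M \<Delta> \<and> mprod G xs = x"
  using garside_group unfolding garside_group_def simples_def by auto

lemma Delta_conj_simple:
  assumes "s \<in> simples G M \<Delta>"
  shows "inv \<Delta> \<otimes> s \<otimes> \<Delta> \<in> M"
proof -
  have s: "s \<in> M" "inv s \<otimes> \<Delta> \<in> M"
    using assms by (simp_all add: simples_def prefix_le_def)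
  then have "\<Delta> \<otimes> inv (inv s \<otimes> \<Delta>) = s"
    by (simp add: inv_mult_group m_assoc)
  with s have "inv s \<otimes> \<Delta> \<in> simples G M \<Delta>"
    by (simp add: simples_eq_right_divisors suffix_le_def)
  then have "inv (inv s \<otimes> \<Delta>) \<otimes> \<Delta> \<in> M"
    by (simp add: simples_def prefix_le_def)
  with s show ?thesis
    by (simp add: inv_mult_group m_assoc)
qed

lemma Delta_inv_conj_simple:
  assumes "s \<in> simples G M \<Delta>"
  shows "\<Delta> \<otimes> s \<otimes> inv \<Delta> \<in> M"
proof -
  have s: "s \<in> M" "\<Delta> \<otimes> inv s \<in> M"
    using assms by (simp_all add: simples_eq_right_divisors suffix_le_def)
  then have "inv (\<Delta> \<otimes> inv s) \<otimes> \<Delta> = s"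
    by (simp add: inv_mult_group m_assoc)
  with s have "\<Delta> \<otimes> inv s \<in> simples G M \<Delta>"
    by (simp add: simples_def prefix_le_def)
  then have "\<Delta> \<otimes> inv (\<Delta> \<otimes> inv s) \<in> M"
    by (simp add: simples_eq_right_divisors suffix_le_def)
  with s show ?thesis
    by (simp add: inv_mult_group m_assoc)
qed

lemma conj_M_of_conj_simples:
  assumes "x \<in> carrier G" "\<And>s. s \<in> simples G M \<Delta> \<Longrightarrow> inv x \<otimes> s \<otimes> x \<in> M" "m \<in> M"
  shows "inv x \<otimes> m \<otimes> x \<in> M"
proof -
  obtain xs where xs: "set xs \<subseteq> simples G M \<Delta>" "mprod G xs = m"
    using simples_generate[OF assms(3)] by blast
  then have "set xs \<subseteq> carrier G"
    using simple_M[of _ \<Delta>] M_carrier by blast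
  with assms(1) have "inv x \<otimes> m \<otimes> x = mprod G (map (\<lambda>s. inv x \<otimes> s \<otimes> x) xs)"
    unfolding xs(2)[symmetric] by (rule conj_mprod)
  also have "\<dots> \<in> M"
    using xs assms(2) by (intro mprod_M) auto
  finally show ?thesis .
qed

lemma Delta_pow_conj_M:
  assumes "m \<in> M"
  shows "inv (\<Delta> [^] (p::int)) \<otimes> m \<otimes> \<Delta> [^] p \<in> M"
proof (rule conj_int_pow_closed[OF _ _ _ _ assms])
  show "M \<subseteq> carrier G"
    by auto
  show "inv \<Delta> \<otimes> m \<otimes> \<Delta> \<in> M" if "m \<in> M" for m
    by (rule conj_M_of_conj_simples) (use that Delta_conj_simple in simp_all)
  show "\<Delta> \<otimes> m \<otimes> inv \<Delta> \<in> M" if "m \<in> M" for m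
  proof -
    have "inv (inv \<Delta>) \<otimes> m \<otimes> inv \<Delta> \<in> M"
      by (rule conj_M_of_conj_simples) (use that Delta_inv_conj_simple in simp_all)
    then show ?thesis
      by simp
  qed
qed simp

lemma Delta_pow_conj_M_iff:
  assumes "h \<in> carrier G"
  shows "inv (\<Delta> [^] (p::int)) \<otimes> h \<otimes> \<Delta> [^] p \<in> M \<longleftrightarrow> h \<in> M"
proof
  assume "inv (\<Delta> [^] p) \<otimes> h \<otimes> \<Delta> [^] p \<in> M"
  then have "inv (\<Delta> [^] (- p)) \<otimes> (inv (\<Delta> [^] p) \<otimes> h \<otimes> \<Delta> [^] p) \<otimes> \<Delta> [^] (- p) \<in> M"
    by (rule Delta_pow_conj_M)
  with assms show "h \<in> M"
    by (simp add: int_pow_neg m_assoc)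
qed (rule Delta_pow_conj_M)

lemma prefix_le_mult_Delta_pow_iff:
  assumes "x \<in> carrier G" "y \<in> carrier G"
  shows "x \<otimes> \<Delta> [^] (p::int) \<preceq> y \<otimes> \<Delta> [^] p \<longleftrightarrow> x \<preceq> y"
proof -
  have "inv (x \<otimes> \<Delta> [^] p) \<otimes> (y \<otimes> \<Delta> [^] p) = inv (\<Delta> [^] p) \<otimes> (inv x \<otimes> y) \<otimes> \<Delta> [^] p"
    using assms by (simp add: inv_mult_group m_assoc)
  with assms show ?thesis
    by (simp add: prefix_le_def Delta_pow_conj_M_iff)
qed

lemma Delta_nat_pow_M [simp]: "\<Delta> [^] (n::nat) \<in> M"
  by (induction n) simp_all

lemma Delta_int_pow_M: "0 \<le> p \<Longrightarrow> \<Delta> [^] (p::int) \<in> M"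
  by (metis Delta_nat_pow_M pow_nat)

lemma Delta_pow_prefix_le_iff: "\<Delta> [^] (r::int) \<preceq> \<Delta> [^] (q::int) \<longleftrightarrow> \<Delta> [^] (q - r) \<in> M"
proof -
  have "\<Delta> [^] (q - r) = \<Delta> [^] (- r) \<otimes> \<Delta> [^] q"
    using int_pow_mult[of \<Delta> "- r" q] by simp
  then show ?thesis
    by (simp add: prefix_le_def int_pow_neg)
qed

lemma Delta_pow_prefix_le: "r \<le> q \<Longrightarrow> \<Delta> [^] (r::int) \<preceq> \<Delta> [^] q"
  by (simp add: Delta_pow_prefix_le_iff Delta_int_pow_M)

lemma Delta_pow_prefix_le_imp_le:
  assumes "\<Delta> \<noteq> \<one>" "\<Delta> [^] (r::int) \<preceq> \<Delta> [^] q"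
  shows "r \<le> q"
proof (rule ccontr)
  assume "\<not> r \<le> q"
  then have "\<Delta> [^] (q - r) \<otimes> \<Delta> [^] (r - q - 1) \<in> M"
    using assms(2) Delta_int_pow_M[of "r - q - 1"] by (simp add: Delta_pow_prefix_le_iff)
  moreover have "\<Delta> [^] (q - r) \<otimes> \<Delta> [^] (r - q - 1) = inv \<Delta>"
    by (simp flip: int_pow_mult add: int_pow_neg[of \<Delta> 1, simplified])
  ultimately have "inv \<Delta> \<in> M"
    by simp
  with assms(1) show False
    using M_units_trivial[OF Delta_M] by simp
qed

lemma mprod_simples_prefix_le_Delta_pow:
  "set xs \<subseteq> simples G M \<Delta> \<Longrightarrow> mprod G xs \<preceq> \<Delta> [^] length xs"
proof (induction xs)
  case Nil
  then show ?case
    by (simp add: prefix_le_def)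
next
  case (Cons s xs)
  have s: "s \<in> M" "s \<preceq> \<Delta>" and xs: "set xs \<subseteq> simples G M \<Delta>"
    using Cons.prems by (auto simp: simples_def)
  have r: "mprod G xs \<in> M"
    using xs simple_M[of _ \<Delta>] by (simp add: mprod_M subset_iff)
  have h1: "s \<otimes> mprod G xs \<preceq> s \<otimes> \<Delta> [^] length xs"
    using Cons.IH[OF xs] prefix_le_mult_left_iff[of "mprod G xs" "\<Delta> [^] length xs" s] s r by simp
  have h2: "s \<otimes> \<Delta> [^] length xs \<preceq> \<Delta> \<otimes> \<Delta> [^] length xs"
    using prefix_le_mult_Delta_pow_iff[of s \<Delta> "int (length xs)"] s by (simp add: int_pow_int)
  have "s \<otimes> mprod G xs \<preceq> \<Delta> \<otimes> \<Delta> [^] length xs"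
    using prefix_le_trans[OF _ _ _ h1 h2] s r by simp
  moreover have "\<Delta> [^] length (s # xs) = \<Delta> \<otimes> \<Delta> [^] length xs"
    unfolding length_Cons by (rule nat_pow_Suc2) simp
  ultimately show ?case
    by simp
qed


lemma M_prefix_le_Delta_pow: "m \<in> M \<Longrightarrow> \<exists>n::nat. m \<preceq> \<Delta> [^] n"
  using simples_generate mprod_simples_prefix_le_Delta_pow by blast

lemma Delta_nat_pow_inv_conj_M: "m \<in> M \<Longrightarrow> \<Delta> [^] (n::nat) \<otimes> m \<otimes> inv (\<Delta> [^] n) \<in> M"
  using Delta_pow_conj_M[of m "- int n"] by (simp add: int_pow_neg_int)

lemma left_fraction_Delta_pow:
  assumes "g \<in> carrier G"
  obtains n :: nat and m where "m \<in> M" "g = inv (\<Delta> [^] n) \<otimes> m"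
proof -
  have "g \<in> generate G M"
    using assms generate_M by simp
  then have "\<exists>n::nat. \<exists>m\<in>M. g = inv (\<Delta> [^] n) \<otimes> m"
  proof (induction rule: generate.induct)
    case one
    have "\<one> = inv (\<Delta> [^] (0::nat)) \<otimes> \<one>"
      by simp
    then show ?case
      using one_M by blast
  next
    case (incl h)
    then have "h = inv (\<Delta> [^] (0::nat)) \<otimes> h"
      by simp
    with incl show ?case
      by blast
  next
    case (inv h)
    obtain n :: nat where "h \<preceq> \<Delta> [^] n"
      using M_prefix_le_Delta_pow[OF inv] by blast
    then have "inv h \<otimes> \<Delta> [^] n \<in> M"
      by (simp add: prefix_le_def)
    then have m: "\<Delta> [^] n \<otimes> (inv h \<otimes> \<Delta> [^] n) \<otimes> inv (\<Delta> [^] n) \<in> M"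
      by (rule Delta_nat_pow_inv_conj_M)
    have "inv h = inv (\<Delta> [^] n) \<otimes> (\<Delta> [^] n \<otimes> (inv h \<otimes> \<Delta> [^] n) \<otimes> inv (\<Delta> [^] n))"
      using inv by (simp add: m_assoc)
    with m show ?case
      by blast
  next
    case (eng h\<^sub>1 h\<^sub>2)
    from eng.IH obtain n\<^sub>1 n\<^sub>2 :: nat and m\<^sub>1 m\<^sub>2
      where m: "m\<^sub>1 \<in> M" "m\<^sub>2 \<in> M" and h: "h\<^sub>1 = inv (\<Delta> [^] n\<^sub>1) \<otimes> m\<^sub>1" "h\<^sub>2 = inv (\<Delta> [^] n\<^sub>2) \<otimes> m\<^sub>2"
      by blast
    have "h\<^sub>1 \<otimes> h\<^sub>2 = inv (\<Delta> [^] (n\<^sub>2 + n\<^sub>1)) \<otimes> ((\<Delta> [^] n\<^sub>2 \<otimes> m\<^sub>1 \<otimes> inv (\<Delta> [^] n\<^sub>2)) \<otimes> m\<^sub>2)"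
      using m h by (simp add: m_assoc inv_mult_group flip: nat_pow_mult)
    moreover have "(\<Delta> [^] n\<^sub>2 \<otimes> m\<^sub>1 \<otimes> inv (\<Delta> [^] n\<^sub>2)) \<otimes> m\<^sub>2 \<in> M"
      using m Delta_nat_pow_inv_conj_M by simp
    ultimately show ?case
      by blast
  qed
  then show ?thesis
    using that by blast
qed

end

section \<open>Infimum and supremum\<close>

lemma le_Greatest_int_iff:
  fixes P :: "int \<Rightarrow> bool"
  assumes "P k" and bounded: "\<And>r. P r \<Longrightarrow> r \<le> N" and down: "\<And>r r'. P r \<Longrightarrow> r' \<le> r \<Longrightarrow> P r'"
  shows "p \<le> (GREATEST r. P r) \<longleftrightarrow> P p"
proof -
  define S where "S = {r. P r \<and> k \<le> r}"
  have "finite S"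
    by (rule finite_subset[of _ "{k..N}"]) (auto simp: S_def bounded)
  moreover have "k \<in> S"
    using assms(1) by (simp add: S_def)
  ultimately have max: "Max S \<in> S"
    by (intro Max_in) auto
  have ge_max: "r \<le> Max S" if "P r" for r
  proof (cases "k \<le> r")
    case True
    with \<open>finite S\<close> that show ?thesis
      by (simp add: S_def)
  next
    case False
    with max show ?thesis
      by (simp add: S_def)
  qed
  have "(GREATEST r. P r) = Max S"
    using max ge_max by (intro Greatest_equality) (auto simp: S_def)
  with max ge_max show ?thesis
    by (auto simp: S_def intro: down)
qed

lemma Least_int_le_iff:
  fixes P :: "int \<Rightarrow> bool"
  assumes "P k" and bounded: "\<And>r. P r \<Longrightarrow> N \<le> r" and up: "\<And>r r'. P r \<Longrightarrow> r \<le> r' \<Longrightarrow> P r'"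
  shows "(LEAST r. P r) \<le> q \<longleftrightarrow> P q"
proof -
  define g where "g = (GREATEST r. P (- r))"
  have g: "r \<le> g \<longleftrightarrow> P (- r)" for r
    unfolding g_def
  proof (rule le_Greatest_int_iff)
    show "P (- (- k))"
      using assms(1) by simp
    show "r \<le> - N" if "P (- r)" for r
      using bounded[OF that] by simp
    show "P (- r')" if "P (- r)" "r' \<le> r" for r r'
      using up that by simp
  qed
  have "(LEAST r. P r) = - g"
    by (rule Least_equality) (use g[of g] g in \<open>auto simp: minus_le_iff\<close>)
  then show ?thesis
    using g[of "- q"] by auto
qed

context garside
begin

lemma Delta_pow_bounds:
  assumes "g \<in> carrier G"
  obtains r q :: int where "\<Delta> [^] r \<preceq> g" "g \<preceq> \<Delta> [^] q"
proof -
  obtain n :: nat and m where m: "m \<in> M" "g = inv (\<Delta> [^] n) \<otimes> m"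
    using assms by (rule left_fraction_Delta_pow)
  obtain k :: nat where "m \<preceq> \<Delta> [^] k"
    using M_prefix_le_Delta_pow[OF m(1)] by blast
  then have "inv (\<Delta> [^] n) \<otimes> m \<preceq> inv (\<Delta> [^] n) \<otimes> \<Delta> [^] k"
    using m(1) by (simp add: prefix_le_mult_left_iff)
  moreover have "inv (\<Delta> [^] n) \<otimes> \<Delta> [^] k = \<Delta> [^] (- int n + int k)"
    using int_pow_mult[of \<Delta> "- int n" "int k"] by (simp add: int_pow_neg_int int_pow_int)
  ultimately have "g \<preceq> \<Delta> [^] (- int n + int k)"
    using m(2) by simp
  moreover have "\<Delta> [^] (- int n) \<preceq> g"
    using m by (simp add: prefix_le_def int_pow_neg_int)
  ultimately show ?thesis
    using that by blast
qed

text \<open>For \<open>\<Delta> = \<one>\<close> the predicates defining ginf and gsup are constant, so their GREATEST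
  and LEAST are unspecified; hence the hypothesis \<open>\<Delta> \<noteq> \<one>\<close> below.\<close>

lemma le_ginf_iff:
  assumes "\<Delta> \<noteq> \<one>" "g \<in> carrier G"
  shows "p \<le> ginf G M \<Delta> g \<longleftrightarrow> \<Delta> [^] p \<preceq> g"
proof -
  obtain r q :: int where r: "\<Delta> [^] r \<preceq> g" and q: "g \<preceq> \<Delta> [^] q"
    using assms(2) by (rule Delta_pow_bounds)
  show ?thesis
    unfolding ginf_def
  proof (rule le_Greatest_int_iff[where P = "\<lambda>r. \<Delta> [^] r \<preceq> g" and k = r and N = q])
    show "\<Delta> [^] r \<preceq> g"
      by (fact r)
    show "r' \<le> q" if "\<Delta> [^] r' \<preceq> g" for r'
      using assms prefix_le_trans[OF _ _ _ that q] by (simp add: Delta_pow_prefix_le_imp_le)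
    show "\<Delta> [^] r'' \<preceq> g" if "\<Delta> [^] r' \<preceq> g" "r'' \<le> r'" for r' r'' :: int
      using assms(2) prefix_le_trans[OF _ _ _ Delta_pow_prefix_le[OF that(2)] that(1)] by simp
  qed
qed

lemma gsup_le_iff:
  assumes "\<Delta> \<noteq> \<one>" "g \<in> carrier G"
  shows "gsup G M \<Delta> g \<le> q \<longleftrightarrow> g \<preceq> \<Delta> [^] q"
proof -
  obtain r q' :: int where r: "\<Delta> [^] r \<preceq> g" and q': "g \<preceq> \<Delta> [^] q'"
    using assms(2) by (rule Delta_pow_bounds)
  show ?thesis
    unfolding gsup_def
  proof (rule Least_int_le_iff[where P = "\<lambda>q. g \<preceq> \<Delta> [^] q" and k = q' and N = r])
    show "g \<preceq> \<Delta> [^] q'"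
      by (fact q')
    show "r \<le> q''" if "g \<preceq> \<Delta> [^] q''" for q''
      using assms prefix_le_trans[OF _ _ _ r that] by (simp add: Delta_pow_prefix_le_imp_le)
    show "g \<preceq> \<Delta> [^] q'''" if "g \<preceq> \<Delta> [^] q''" "q'' \<le> q'''" for q'' q''' :: int
      using assms(2) prefix_le_trans[OF _ _ _ that(1) Delta_pow_prefix_le[OF that(2)]] by simp
  qed
qed

lemma Delta_pow_prefix_Delta_pow_conj_iff:
  assumes "g \<in> carrier G"
  shows "\<Delta> [^] (r::int) \<preceq> inv (\<Delta> [^] (p::int)) \<otimes> g \<otimes> \<Delta> [^] p \<longleftrightarrow> \<Delta> [^] r \<preceq> g"
proof -
  have "inv (\<Delta> [^] r) \<otimes> (inv (\<Delta> [^] p) \<otimes> g \<otimes> \<Delta> [^] p) = inv (\<Delta> [^] p) \<otimes> (inv (\<Delta> [^] r) \<otimes> g) \<otimes> \<Delta> [^] p"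
    using assms by (simp add: m_assoc[symmetric] int_pow_commute flip: int_pow_neg)
  with assms show ?thesis
    by (simp add: prefix_le_def Delta_pow_conj_M_iff)
qed

lemma Delta_pow_conj_prefix_Delta_pow_iff:
  assumes "g \<in> carrier G"
  shows "inv (\<Delta> [^] (p::int)) \<otimes> g \<otimes> \<Delta> [^] p \<preceq> \<Delta> [^] (r::int) \<longleftrightarrow> g \<preceq> \<Delta> [^] r"
proof -
  have "inv (inv (\<Delta> [^] p) \<otimes> g \<otimes> \<Delta> [^] p) \<otimes> \<Delta> [^] r = inv (\<Delta> [^] p) \<otimes> (inv g \<otimes> \<Delta> [^] r) \<otimes> \<Delta> [^] p"
    using assms by (simp add: m_assoc inv_mult_group int_pow_commute)
  with assms show ?thesis
    by (simp add: prefix_le_def Delta_pow_conj_M_iff)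
qed

lemma ginf_Delta_pow_conj: "g \<in> carrier G \<Longrightarrow> ginf G M \<Delta> (inv (\<Delta> [^] (p::int)) \<otimes> g \<otimes> \<Delta> [^] p) = ginf G M \<Delta> g"
  by (simp add: ginf_def Delta_pow_prefix_Delta_pow_conj_iff)

lemma gsup_Delta_pow_conj: "g \<in> carrier G \<Longrightarrow> gsup G M \<Delta> (inv (\<Delta> [^] (p::int)) \<otimes> g \<otimes> \<Delta> [^] p) = gsup G M \<Delta> g"
  by (simp add: gsup_def Delta_pow_conj_prefix_Delta_pow_iff)

end

section \<open>Walks in the minimal summit graph\<close>

locale summit_graph = group_submonoid G M for G :: "('g, 'b) monoid_scheme" (structure) and M +
  fixes \<Delta> a :: 'g
  assumes a_carrier: "a \<in> carrier G"
begin

lemma conjugates_carrier: "x \<in> conjugates G a \<Longrightarrow> x \<in> carrier G"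
  using a_carrier by (auto simp: conjugates_def)

lemma conjugates_conj:
  assumes "x \<in> conjugates G a" "c \<in> carrier G"
  shows "inv c \<otimes> x \<otimes> c \<in> conjugates G a"
proof -
  obtain d where d: "d \<in> carrier G" "x = inv d \<otimes> a \<otimes> d"
    using assms(1) by (auto simp: conjugates_def)
  then have "inv c \<otimes> x \<otimes> c = inv (d \<otimes> c) \<otimes> a \<otimes> (d \<otimes> c)"
    using assms(2) a_carrier by (simp add: m_assoc inv_mult_group)
  with d assms(2) show ?thesis
    unfolding conjugates_def by blast
qed

lemma summit_class_carrier: "x \<in> summit_class G M \<Delta> a \<Longrightarrow> x \<in> carrier G"
  by (simp add: summit_class_def conjugates_carrier)

lemma summit_class_conj:
  "x \<in> summit_class G M \<Delta> a \<Longrightarrow> c \<in> carrier G \<Longrightarrow> inv c \<otimes> x \<otimes> c \<in> conjugates G a"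
  by (simp add: summit_class_def conjugates_conj)

lemma summit_min_simplesD:
  "s \<in> summit_min_simples G M \<Delta> a x \<Longrightarrow>
    s \<in> simples G M \<Delta> \<and> s \<noteq> \<one> \<and> inv s \<otimes> x \<otimes> s \<in> summit_class G M \<Delta> a"
  by (simp add: summit_min_simples_def Let_def)

lemma summit_min_simples_M: "s \<in> summit_min_simples G M \<Delta> a x \<Longrightarrow> s \<in> M"
  using summit_min_simplesD[of s x] by (simp add: simple_M[of _ \<Delta>])

lemma msg_walk_conj:
  "msg_walk G M \<Delta> a x z g \<Longrightarrow> g \<in> carrier G \<and> z = inv g \<otimes> x \<otimes> g"
proof (induction rule: msg_walk.induct)
  case (nil x)
  then show ?case
    by (simp add: summit_class_carrier)
next
  case (fwd x s z g)
  have "s \<in> carrier G" "x \<in> carrier G"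
    using fwd.hyps(1,2) by (simp_all add: summit_min_simples_M summit_class_carrier)
  with fwd.IH show ?case
    by (simp add: m_assoc inv_mult_group)
next
  case (bwd y s x z g)
  have "s \<in> carrier G" "y \<in> carrier G"
    using bwd.hyps(1,2) by (simp_all add: summit_min_simples_M summit_class_carrier)
  with bwd.IH bwd.hyps(3) show ?case
    by (auto simp: m_assoc inv_mult_group)
qed

lemma msg_walk_append:
  "msg_walk G M \<Delta> a x y g \<Longrightarrow> msg_walk G M \<Delta> a y z h \<Longrightarrow> msg_walk G M \<Delta> a x z (g \<otimes> h)"
proof (induction rule: msg_walk.induct)
  case (nil x)
  then show ?case
    using msg_walk_conj by simp
next
  case (fwd x s y g)
  have "s \<in> carrier G" "g \<in> carrier G" "h \<in> carrier G"
    using fwd.hyps(2) msg_walk_conj[OF fwd.hyps(3)] msg_walk_conj[OF fwd.prems]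
    by (simp_all add: summit_min_simples_M)
  with msg_walk.fwd[OF fwd.hyps(1,2) fwd.IH[OF fwd.prems]] show ?case
    by (simp add: m_assoc)
next
  case (bwd y' s x y g)
  have "s \<in> carrier G" "g \<in> carrier G" "h \<in> carrier G"
    using bwd.hyps(2) msg_walk_conj[OF bwd.hyps(4)] msg_walk_conj[OF bwd.prems]
    by (simp_all add: summit_min_simples_M)
  with msg_walk.bwd[OF bwd.hyps(1-3) bwd.IH[OF bwd.prems]] show ?case
    by (simp add: m_assoc)
qed

lemma msg_walk_reverse: "msg_walk G M \<Delta> a x z g \<Longrightarrow> msg_walk G M \<Delta> a z x (inv g)"
proof (induction rule: msg_walk.induct)
  case (nil x)
  then show ?case
    using msg_walk.nil by simp
next
  case (fwd x s z g)
  have s: "s \<in> carrier G" and g: "g \<in> carrier G"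
    using fwd.hyps(2) msg_walk_conj[OF fwd.hyps(3)] by (simp_all add: summit_min_simples_M)
  have "msg_walk G M \<Delta> a (inv s \<otimes> x \<otimes> s) x (inv s \<otimes> \<one>)"
    by (rule msg_walk.bwd[OF fwd.hyps(1,2) refl msg_walk.nil[OF fwd.hyps(1)]])
  with s have "msg_walk G M \<Delta> a (inv s \<otimes> x \<otimes> s) x (inv s)"
    by simp
  with fwd.IH have "msg_walk G M \<Delta> a z x (inv g \<otimes> inv s)"
    by (rule msg_walk_append)
  with s g show ?case
    by (simp add: inv_mult_group)
next
  case (bwd y s x z g)
  have s: "s \<in> carrier G" and g: "g \<in> carrier G"
    using bwd.hyps(2) msg_walk_conj[OF bwd.hyps(4)] by (simp_all add: summit_min_simples_M)
  have x: "x \<in> summit_class G M \<Delta> a"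
    using summit_min_simplesD[OF bwd.hyps(2)] bwd.hyps(3) by simp
  have "msg_walk G M \<Delta> a (inv s \<otimes> y \<otimes> s) x \<one>"
    using msg_walk.nil[OF x] bwd.hyps(3) by simp
  then have "msg_walk G M \<Delta> a y x (s \<otimes> \<one>)"
    by (rule msg_walk.fwd[OF bwd.hyps(1,2)])
  with s have "msg_walk G M \<Delta> a y x s"
    by simp
  with bwd.IH have "msg_walk G M \<Delta> a z x (inv g \<otimes> s)"
    by (rule msg_walk_append)
  with s g show ?case
    by (simp add: inv_mult_group)
qed

lemma msg_loop_image_subset_centralizer:
  assumes "a' \<in> summit_class G M \<Delta> a"
  shows "msg_loop_image G M \<Delta> a a' \<subseteq> {c \<in> carrier G. c \<otimes> a' = a' \<otimes> c}"
proof
  fix g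
  assume "g \<in> msg_loop_image G M \<Delta> a a'"
  then have g: "g \<in> carrier G" and a'_eq: "a' = inv g \<otimes> a' \<otimes> g"
    using msg_walk_conj by (auto simp: msg_loop_image_def)
  from a'_eq have "g \<otimes> a' = g \<otimes> (inv g \<otimes> a' \<otimes> g)"
    by (rule arg_cong)
  also have "\<dots> = a' \<otimes> g"
    using g summit_class_carrier[OF assms] by (simp add: m_assoc)
  finally show "g \<in> {c \<in> carrier G. c \<otimes> a' = a' \<otimes> c}"
    using g by simp
qed

end

section \<open>Summit classes and their prefix gcds\<close>

context garside
begin

lemma prefix_gcd_in_M:
  assumes "u \<in> M" "v \<in> M"
  obtains w where "w \<in> M" "w \<preceq> u" "w \<preceq> v" "\<forall>d\<in>M. d \<preceq> u \<longrightarrow> d \<preceq> v \<longrightarrow> d \<preceq> w"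
proof -
  have "\<exists>w\<in>M. w \<preceq> u \<and> w \<preceq> v \<and> (\<forall>d\<in>M. d \<preceq> u \<and> d \<preceq> v \<longrightarrow> d \<preceq> w)"
    using prefix_gcds assms unfolding has_lcms_gcds_def by blast
  then show ?thesis
    using that by blast
qed

lemma prefix_gcd_in_group:
  assumes "u \<in> M" "v \<in> M"
  obtains w where "w \<in> M" "w \<preceq> u" "w \<preceq> v" "\<forall>k\<in>carrier G. k \<preceq> u \<longrightarrow> k \<preceq> v \<longrightarrow> k \<preceq> w"
proof -
  obtain w where w: "w \<in> M" "w \<preceq> u" "w \<preceq> v" and gcd: "\<forall>d\<in>M. d \<preceq> u \<longrightarrow> d \<preceq> v \<longrightarrow> d \<preceq> w"
    using assms by (rule prefix_gcd_in_M)
  have "k \<preceq> w" if k: "k \<in> carrier G" "k \<preceq> u" "k \<preceq> v" for k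
  proof -
    \<comment> \<open>Write \<open>k = \<Delta>^-n m\<close>; left multiplication by \<open>\<Delta>^n\<close> reduces the claim to gcds in M.\<close>
    obtain n :: nat and m where m: "m \<in> M" "k = inv (\<Delta> [^] n) \<otimes> m"
      using k(1) by (rule left_fraction_Delta_pow)
    define E where "E = \<Delta> [^] n"
    have E: "E \<in> M" "m = E \<otimes> k"
      using m by (simp_all add: E_def)
    have "E \<otimes> u \<in> M" "E \<otimes> v \<in> M"
      using E(1) assms by simp_all
    then obtain d where d: "d \<in> M" "d \<preceq> E \<otimes> u" "d \<preceq> E \<otimes> v"
      and d_gcd: "\<forall>d'\<in>M. d' \<preceq> E \<otimes> u \<longrightarrow> d' \<preceq> E \<otimes> v \<longrightarrow> d' \<preceq> d"
      by (rule prefix_gcd_in_M)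
    have "m \<preceq> E \<otimes> u" "m \<preceq> E \<otimes> v"
      using k E assms by (simp_all add: prefix_le_mult_left_iff)
    with d_gcd m(1) have m_d: "m \<preceq> d"
      by blast
    have "E \<preceq> E \<otimes> u" "E \<preceq> E \<otimes> v"
      using E(1) assms by (simp_all add: prefix_le_mult_M)
    with d_gcd E(1) have "E \<preceq> d"
      by blast
    then have e: "inv E \<otimes> d \<in> M" "d = E \<otimes> (inv E \<otimes> d)"
      using E(1) d(1) by (simp_all add: prefix_le_def)
    have "inv E \<otimes> d \<preceq> u" "inv E \<otimes> d \<preceq> v"
      using d(2,3) e E(1) assms by (metis M_carrier prefix_le_mult_left_iff)+
    with gcd e(1) have "inv E \<otimes> d \<preceq> w"
      by blast
    then have "d \<preceq> E \<otimes> w"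
      using e E(1) w(1) by (metis M_carrier prefix_le_mult_left_iff)
    with m_d have "m \<preceq> E \<otimes> w"
      using prefix_le_trans[OF _ _ _ m_d] d(1) m(1) E(1) w(1) by simp
    then show "k \<preceq> w"
      using E k(1) w(1) by (simp add: prefix_le_mult_left_iff)
  qed
  with w show ?thesis
    using that by blast
qed

lemma Delta_pow_prefix_conj_iff:
  assumes "x \<in> carrier G" "y \<in> carrier G"
  shows "\<Delta> [^] (p::int) \<preceq> inv y \<otimes> x \<otimes> y \<longleftrightarrow> inv x \<otimes> y \<otimes> \<Delta> [^] p \<preceq> y"
proof -
  have "inv (inv x \<otimes> y \<otimes> \<Delta> [^] p) \<otimes> y = inv (\<Delta> [^] p) \<otimes> (inv y \<otimes> x \<otimes> y)"
    using assms by (simp add: inv_mult_group m_assoc)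
  then show ?thesis
    by (simp add: prefix_le_def)
qed

lemma conj_prefix_Delta_pow_iff:
  assumes "x \<in> carrier G" "y \<in> carrier G"
  shows "inv y \<otimes> x \<otimes> y \<preceq> \<Delta> [^] (q::int) \<longleftrightarrow> x \<otimes> y \<otimes> \<Delta> [^] (- q) \<preceq> y"
proof -
  have "inv (x \<otimes> y \<otimes> \<Delta> [^] (- q)) \<otimes> y
      = inv (\<Delta> [^] (- q)) \<otimes> (inv (inv y \<otimes> x \<otimes> y) \<otimes> \<Delta> [^] q) \<otimes> \<Delta> [^] (- q)"
    using assms by (simp add: inv_mult_group m_assoc int_pow_neg)
  with assms show ?thesis
    by (simp add: prefix_le_def Delta_pow_conj_M_iff)
qed

lemma nontrivial_simple_prefix:
  assumes "u \<in> M" "u \<noteq> \<one>"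
  obtains s where "s \<in> simples G M \<Delta>" "s \<noteq> \<one>" "s \<preceq> u"
proof -
  obtain xs where xs: "set xs \<subseteq> simples G M \<Delta>" "mprod G xs = u"
    using simples_generate[OF assms(1)] by blast
  have "\<exists>s\<in>simples G M \<Delta>. s \<noteq> \<one> \<and> s \<preceq> mprod G xs"
    if "set xs \<subseteq> simples G M \<Delta>" "mprod G xs \<noteq> \<one>" for xs
    using that
  proof (induction xs)
    case (Cons s xs)
    have "s \<in> M" "mprod G xs \<in> M"
      using Cons.prems simple_M[of _ \<Delta>] by (auto intro: mprod_M)
    then show ?case
      using Cons prefix_le_mult_M[of s "mprod G xs"] by (cases "s = \<one>") auto
  qed simp
  with xs assms(2) that show ?thesis
    by blast
qed

end

locale garside_summit_graph = garside +
  fixes a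
  assumes a_carrier: "a \<in> carrier G"

sublocale garside_summit_graph \<subseteq> summit_graph G M \<Delta> a
  by unfold_locales (fact a_carrier)

context garside_summit_graph
begin

lemma summit_class_iff_Delta_pow_bounds:
  assumes "\<Delta> \<noteq> \<one>" "x \<in> summit_class G M \<Delta> a" "y \<in> conjugates G a"
  shows "y \<in> summit_class G M \<Delta> a \<longleftrightarrow> \<Delta> [^] ginf G M \<Delta> x \<preceq> y \<and> y \<preceq> \<Delta> [^] gsup G M \<Delta> x"
proof -
  have x: "x \<in> conjugates G a"
    and x_max: "\<forall>w\<in>conjugates G a. ginf G M \<Delta> w \<le> ginf G M \<Delta> x \<and> gsup G M \<Delta> x \<le> gsup G M \<Delta> w"
    using assms(2) by (auto simp: summit_class_def)
  have "y \<in> summit_class G M \<Delta> a \<longleftrightarrow> ginf G M \<Delta> x \<le> ginf G M \<Delta> y \<and> gsup G M \<Delta> y \<le> gsup G M \<Delta> x"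
  proof
    assume "y \<in> summit_class G M \<Delta> a"
    with x show "ginf G M \<Delta> x \<le> ginf G M \<Delta> y \<and> gsup G M \<Delta> y \<le> gsup G M \<Delta> x"
      by (simp add: summit_class_def)
  next
    assume "ginf G M \<Delta> x \<le> ginf G M \<Delta> y \<and> gsup G M \<Delta> y \<le> gsup G M \<Delta> x"
    with x_max assms(3) show "y \<in> summit_class G M \<Delta> a"
      unfolding summit_class_def by force
  qed
  also have "\<dots> \<longleftrightarrow> \<Delta> [^] ginf G M \<Delta> x \<preceq> y \<and> y \<preceq> \<Delta> [^] gsup G M \<Delta> x"
    using assms(1) conjugates_carrier[OF assms(3)] by (simp add: le_ginf_iff gsup_le_iff)
  finally show ?thesis .
qed

lemma summit_class_Delta_pow_conj:
  assumes "x \<in> summit_class G M \<Delta> a"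
  shows "inv (\<Delta> [^] (p::int)) \<otimes> x \<otimes> \<Delta> [^] p \<in> summit_class G M \<Delta> a"
  using assms summit_class_conj[OF assms, of "\<Delta> [^] p"] summit_class_carrier[OF assms]
  by (simp add: summit_class_def ginf_Delta_pow_conj gsup_Delta_pow_conj)

lemma summit_class_prefix_gcd:
  assumes "\<Delta> \<noteq> \<one>" "x \<in> summit_class G M \<Delta> a"
    and "u \<in> M" "inv u \<otimes> x \<otimes> u \<in> summit_class G M \<Delta> a"
    and "v \<in> M" "inv v \<otimes> x \<otimes> v \<in> summit_class G M \<Delta> a"
    and "w \<in> M" "w \<preceq> u" "w \<preceq> v" "\<forall>k\<in>carrier G. k \<preceq> u \<longrightarrow> k \<preceq> v \<longrightarrow> k \<preceq> w"
  shows "inv w \<otimes> x \<otimes> w \<in> summit_class G M \<Delta> a"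
proof -
  have x: "x \<in> carrier G"
    using assms(2) by (rule summit_class_carrier)
  \<comment> \<open>Both summit bounds for a conjugate by y have the form \<open>z \<otimes> y \<otimes> \<Delta> [^] r \<preceq> y\<close>
    (Delta_pow_prefix_conj_iff, conj_prefix_Delta_pow_iff), and this condition passes to gcds.\<close>
  have twisted: "z \<otimes> w \<otimes> \<Delta> [^] r \<preceq> w"
    if z: "z \<in> carrier G" "z \<otimes> u \<otimes> \<Delta> [^] r \<preceq> u" "z \<otimes> v \<otimes> \<Delta> [^] r \<preceq> v" for z and r :: int
  proof -
    have "z \<otimes> w \<otimes> \<Delta> [^] r \<preceq> z \<otimes> u \<otimes> \<Delta> [^] r" "z \<otimes> w \<otimes> \<Delta> [^] r \<preceq> z \<otimes> v \<otimes> \<Delta> [^] r"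
      using z(1) assms(3,5,7-9) by (simp_all add: prefix_le_mult_Delta_pow_iff prefix_le_mult_left_iff)
    then have "z \<otimes> w \<otimes> \<Delta> [^] r \<preceq> u" "z \<otimes> w \<otimes> \<Delta> [^] r \<preceq> v"
      using prefix_le_trans[OF _ _ _ _ z(2)] prefix_le_trans[OF _ _ _ _ z(3)] z(1) assms(3,5,7)
      by simp_all
    with assms(7,10) z(1) show ?thesis
      by simp
  qed
  let ?p = "ginf G M \<Delta> x" and ?q = "gsup G M \<Delta> x"
  have bounds: "\<Delta> [^] ?p \<preceq> inv y \<otimes> x \<otimes> y \<and> inv y \<otimes> x \<otimes> y \<preceq> \<Delta> [^] ?q \<longleftrightarrow>
      inv y \<otimes> x \<otimes> y \<in> summit_class G M \<Delta> a" if "y \<in> M" for y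
    using summit_class_iff_Delta_pow_bounds[OF assms(1,2) summit_class_conj[OF assms(2)]] that
    by simp
  have "inv x \<otimes> w \<otimes> \<Delta> [^] ?p \<preceq> w"
    using bounds[of u] bounds[of v] assms(3-6) x
    by (intro twisted) (simp_all add: Delta_pow_prefix_conj_iff)
  moreover have "x \<otimes> w \<otimes> \<Delta> [^] (- ?q) \<preceq> w"
    using bounds[of u] bounds[of v] assms(3-6) x
    by (intro twisted) (simp_all add: conj_prefix_Delta_pow_iff)
  ultimately show ?thesis
    using bounds[of w] assms(7) x by (simp add: Delta_pow_prefix_conj_iff conj_prefix_Delta_pow_iff)
qed

lemma summit_min_simple_below:
  assumes "s \<in> simples G M \<Delta>" "s \<noteq> \<one>" "inv s \<otimes> x \<otimes> s \<in> summit_class G M \<Delta> a"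
  obtains t where "t \<in> summit_min_simples G M \<Delta> a x" "t \<preceq> s"
proof -
  define T where "T = {t \<in> simples G M \<Delta> - {\<one>}. inv t \<otimes> x \<otimes> t \<in> summit_class G M \<Delta> a}"
  define A where "A = {t \<in> T. t \<preceq> s}"
  let ?R = "\<lambda>t t'. t \<preceq> t' \<and> t \<noteq> t'"
  have T_carrier: "t \<in> carrier G" if "t \<in> T" for t
    using that simple_M[of _ \<Delta>] by (auto simp: T_def)
  have "finite A"
    using finite_simples by (auto simp: A_def T_def intro: finite_subset)
  moreover have "asymp_on A ?R"
    using T_carrier prefix_le_antisym by (auto simp: A_def intro!: asymp_onI)
  moreover have "transp_on A ?R"
  proof (rule transp_onI)
    fix t\<^sub>1 t\<^sub>2 t\<^sub>3
    assume "t\<^sub>1 \<in> A" "t\<^sub>2 \<in> A" "t\<^sub>3 \<in> A" and R: "?R t\<^sub>1 t\<^sub>2" "?R t\<^sub>2 t\<^sub>3"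
    then have carrier: "t\<^sub>1 \<in> carrier G" "t\<^sub>2 \<in> carrier G" "t\<^sub>3 \<in> carrier G"
      using T_carrier by (auto simp: A_def)
    with R have "t\<^sub>1 \<preceq> t\<^sub>3"
      using prefix_le_trans by blast
    moreover have "t\<^sub>1 \<noteq> t\<^sub>3"
      using R carrier prefix_le_antisym[of t\<^sub>2 t\<^sub>3] by auto
    ultimately show "?R t\<^sub>1 t\<^sub>3"
      by blast
  qed
  moreover have "A \<noteq> {}"
    using assms simple_M[of _ \<Delta>] prefix_le_refl[of s] by (auto simp: A_def T_def)
  ultimately obtain t where t: "t \<in> A" and t_min: "\<forall>t'\<in>A. t' \<noteq> t \<longrightarrow> \<not> ?R t' t"
    using Finite_Set.bex_min_element by blast
  have "t \<in> summit_min_simples G M \<Delta> a x"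
  proof -
    have "t' = t" if "t' \<in> T" "t' \<preceq> t" for t'
      using t t_min that prefix_le_trans[OF _ _ _ that(2)] T_carrier simple_M[of _ \<Delta>] assms(1)
      by (auto simp: A_def)
    with t show ?thesis
      by (auto simp: summit_min_simples_def Let_def A_def T_def)
  qed
  with t that show ?thesis
    by (auto simp: A_def)
qed

lemma msg_walk_of_M_conjugator:
  assumes "u \<in> M" "x \<in> summit_class G M \<Delta> a" "inv u \<otimes> x \<otimes> u \<in> summit_class G M \<Delta> a"
  shows "msg_walk G M \<Delta> a x (inv u \<otimes> x \<otimes> u) u"
  using assms
proof (induction "factor_length u" arbitrary: u x rule: less_induct)
  case less
  have x: "x \<in> carrier G"
    using less.prems(2) by (rule summit_class_carrier)
  show ?case
  proof (cases "u = \<one>")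
    case True
    with less.prems(2) x show ?thesis
      using msg_walk.nil by simp
  next
    case False
    obtain s where s: "s \<in> simples G M \<Delta>" "s \<noteq> \<one>" "s \<preceq> u"
      using less.prems(1) False by (rule nontrivial_simple_prefix)
    have s_M: "s \<in> M"
      using s(1) by (rule simple_M)
    have "\<Delta> \<noteq> \<one>"
      using s M_prefix_le_one[OF s_M] by (auto simp: simples_def)
    obtain w where w: "w \<in> M" "w \<preceq> u" "w \<preceq> \<Delta>"
      and w_gcd: "\<forall>k\<in>carrier G. k \<preceq> u \<longrightarrow> k \<preceq> \<Delta> \<longrightarrow> k \<preceq> w"
      using less.prems(1) Delta_M by (rule prefix_gcd_in_group)
    have "inv \<Delta> \<otimes> x \<otimes> \<Delta> \<in> summit_class G M \<Delta> a"
      using summit_class_Delta_pow_conj[OF less.prems(2), of 1] by simp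
    with \<open>\<Delta> \<noteq> \<one>\<close> less.prems w w_gcd
    have w_summit: "inv w \<otimes> x \<otimes> w \<in> summit_class G M \<Delta> a"
      by (intro summit_class_prefix_gcd[of x u \<Delta> w]) simp_all
    have "s \<preceq> w"
      using w_gcd s s_M by (simp add: simples_def)
    then have "w \<noteq> \<one>"
      using s(2) M_prefix_le_one[OF s_M] by auto
    with w obtain t where t: "t \<in> summit_min_simples G M \<Delta> a x" "t \<preceq> w"
      using summit_min_simple_below[of w x] w_summit by (auto simp: simples_def)
    have t': "t \<in> M" "t \<noteq> \<one>" "inv t \<otimes> x \<otimes> t \<in> summit_class G M \<Delta> a"
      using summit_min_simplesD[OF t(1)] summit_min_simples_M[OF t(1)] by simp_all
    define u' where "u' = inv t \<otimes> u"
    have "t \<preceq> u"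
      using prefix_le_trans[OF _ _ _ t(2) w(2)] t'(1) w(1) less.prems(1) by simp
    then have u': "u' \<in> M" "u = t \<otimes> u'"
      using t'(1) less.prems(1) by (simp_all add: u'_def prefix_le_def)
    have "factor_length u' < factor_length u"
      using factor_length_mult[OF t'(1) u'(1)] factor_length_pos[OF t'(1,2)] u'(2) by simp
    moreover have "inv u' \<otimes> (inv t \<otimes> x \<otimes> t) \<otimes> u' = inv u \<otimes> x \<otimes> u"
      using u' t'(1) x by (simp add: m_assoc inv_mult_group)
    ultimately have "msg_walk G M \<Delta> a (inv t \<otimes> x \<otimes> t) (inv u \<otimes> x \<otimes> u) u'"
      using less.hyps[OF _ u'(1) t'(3)] less.prems(3) by simp
    then show ?thesis
      using msg_walk.fwd[OF less.prems(2) t(1)] u'(2) by simp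
  qed
qed

lemma centralizer_subset_msg_loop_image:
  assumes a': "a' \<in> summit_class G M \<Delta> a"
  shows "{c \<in> carrier G. c \<otimes> a' = a' \<otimes> c} \<subseteq> msg_loop_image G M \<Delta> a a'"
proof
  fix c
  assume "c \<in> {c \<in> carrier G. c \<otimes> a' = a' \<otimes> c}"
  then have c: "c \<in> carrier G" "c \<otimes> a' = a' \<otimes> c"
    by auto
  obtain n :: nat and m where m: "m \<in> M" "c = inv (\<Delta> [^] n) \<otimes> m"
    using c(1) by (rule left_fraction_Delta_pow)
  define y where "y = inv (\<Delta> [^] (- int n)) \<otimes> a' \<otimes> \<Delta> [^] (- int n)"
  have y: "y \<in> summit_class G M \<Delta> a"
    unfolding y_def using a' by (rule summit_class_Delta_pow_conj)
  have a'_carrier: "a' \<in> carrier G"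
    using a' by (rule summit_class_carrier)
  have "inv c \<otimes> a' \<otimes> c = a'"
    using c a'_carrier by (simp add: m_assoc flip: c(2))
  moreover have "inv m \<otimes> y \<otimes> m = inv c \<otimes> a' \<otimes> c"
    using m a'_carrier by (simp add: y_def int_pow_neg_int m_assoc inv_mult_group)
  moreover have "inv (\<Delta> [^] n) \<otimes> y \<otimes> \<Delta> [^] n = a'"
    using a'_carrier by (simp add: y_def int_pow_neg_int m_assoc)
  ultimately have "msg_walk G M \<Delta> a y a' m" "msg_walk G M \<Delta> a y a' (\<Delta> [^] n)"
    using msg_walk_of_M_conjugator[OF m(1) y] msg_walk_of_M_conjugator[OF Delta_nat_pow_M[of n] y] a' by simp_all
  then have "msg_walk G M \<Delta> a a' a' (inv (\<Delta> [^] n) \<otimes> m)"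
    using msg_walk_append[OF msg_walk_reverse] by blast
  with m show "c \<in> msg_loop_image G M \<Delta> a a'"
    by (simp add: msg_loop_image_def)
qed

end

theorem theorem3p4:
  fixes G :: "('g, 'b) monoid_scheme" and M :: "'g set" and \<Delta> a a' :: 'g
  assumes "garside_group G M \<Delta>"
    and "a \<in> carrier G"
    and "a' \<in> summit_class G M \<Delta> a"
  shows "msg_loop_image G M \<Delta> a a' = {c \<in> carrier G. c \<otimes>\<^bsub>G\<^esub> a' = a' \<otimes>\<^bsub>G\<^esub> c}"
proof -
  interpret garside_summit_graph G M \<Delta> a
    by (intro garside_summit_graph.intro garside.intro garside_summit_graph_axioms.intro) fact+
  show ?thesis
  proof
    show "msg_loop_image G M \<Delta> a a' \<subseteq> {c \<in> carrier G. c \<otimes>\<^bsub>G\<^esub> a' = a' \<otimes>\<^bsub>G\<^esub> c}"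
      using assms(3) by (rule msg_loop_image_subset_centralizer)
    show "{c \<in> carrier G. c \<otimes>\<^bsub>G\<^esub> a' = a' \<otimes>\<^bsub>G\<^esub> c} \<subseteq> msg_loop_image G M \<Delta> a a'"
      using assms(3) by (rule centralizer_subset_msg_loop_image)
  qed
qed

end
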